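(* Let $S$ be a formula such that $F_n(u,v)\in S$ for all $u,v\in S$ and $n\ge0$. Then $\mathbb{C}[D]\otimes S$, with the extended products and the operator $D$, is a vertex Lie superalgebra if and only if $F_n=0$ for all $n\ge1$ and $F_0:S\otimes S\to S$ is the bracket of a Lie superalgebra structure on $S$.
   Context: All spaces over $\mathbb{C}$; $\mathbb{N}=\{0,1,2,\dots\}$; $\varepsilon_{u,v}=(-1)^{|u||v|}$. A formula is a $\mathbb{Z}_2$-graded space $S$ with parity-preserving linear maps $F_n:S\otimes S\to\mathbb{C}[D]\otimes S$ ($n\in\mathbb{N}$; $\mathbb{C}[D]$, formal polynomials in $D$, is even) with $F_n(u,v)=0$ for $n$ large; write $u_nv=F_n(u,v)$, identify $S=1\otimes S$, and let $D(D^k\otimes u)=D^{k+1}\otimes u$. The products extend uniquely to bilinear products $A_nB$ ($n\in\mathbb{N}$) on $\mathbb{C}[D]\otimes S$ with $(DA)_nB=-nA_{n-1}B$ and $D(A_nB)=(DA)_nB+A_n(DB)$; explicitly $\sum_{n\ge0}(P(D)u)_n(Q(D)v)z^{-n-1}=P(\frac{d}{dz})Q(D-\frac{d}{dz})\sum_{n\ge0}(u_nv)z^{-n-1}$ for $u,v\in S$ and polynomials $P,Q$. A vertex Lie superalgebra is a $\mathbb{Z}_2$-graded space $U$ with an even operator $D$ and bilinear products $u_nv$ ($n\in\mathbb{N}$) such that for homogeneous $u,v,w$: $u_nv=0$ for $n$ large; $|u_nv|=|u|+|v|$; $(Du)_nv=-nu_{n-1}v$ (read as $0$ for $n=0$)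 and $D(u_nv)=(Du)_nv+u_n(Dv)$; $u_nv=-\varepsilon_{u,v}\sum_{k\ge0}(-1)^{n+k}\frac{D^k}{k!}v_{n+k}u$; and for all $k,m,n\in\mathbb{N}$, $\sum_{i\ge0}(-1)^i\binom{k}{i}(u_{m+k-i}(v_{n+i}w)-\varepsilon_{u,v}(-1)^kv_{n+k-i}(u_{m+i}w))=\sum_{i\ge0}\binom{m}{i}(u_{k+i}v)_{m+n-i}w$. *)

theory Defs
  imports Complex_Main "HOL-Computational_Algebra.Polynomial"
begin

text \<open>Complex vector spaces are modelled as complex modules: an abelian group type
  together with a scalar multiplication sc satisfying the module axioms.  Parities are booleans (False = even, True = odd).\<close>

definition graded_space :: "(complex \<Rightarrow> 'a::ab_group_add \<Rightarrow> 'a) \<Rightarrow> 'a set \<Rightarrow> 'a set \<Rightarrow> bool" where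
  "graded_space sc V0 V1 \<longleftrightarrow> module sc \<and> module.subspace sc V0 \<and> module.subspace sc V1
     \<and> V0 \<inter> V1 = {0} \<and> (\<forall>x. \<exists>a\<in>V0. \<exists>b\<in>V1. x = a + b)"

definition par :: "'a set \<Rightarrow> 'a set \<Rightarrow> bool \<Rightarrow> 'a set" where
  "par V0 V1 p = (if p then V1 else V0)"

definition eps :: "bool \<Rightarrow> bool \<Rightarrow> complex" where
  "eps p q = (if p \<and> q then -1 else 1)"

definition bilinear_map :: "(complex \<Rightarrow> 'a::ab_group_add \<Rightarrow> 'a) \<Rightarrow> (complex \<Rightarrow> 'b::ab_group_add \<Rightarrow> 'b)
     \<Rightarrow> ('a \<Rightarrow> 'a \<Rightarrow> 'b) \<Rightarrow> bool" where
  "bilinear_map sc sc' f \<longleftrightarrow>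
     (\<forall>x y z. f (x + y) z = f x z + f y z) \<and> (\<forall>x y z. f z (x + y) = f z x + f z y)
   \<and> (\<forall>c x y. f (sc c x) y = sc' c (f x y)) \<and> (\<forall>c x y. f x (sc c y) = sc' c (f x y))"

text \<open>The element sum_k D^k \<otimes> s_k is the polynomial with coefficients s_k.\<close>

definition pscale :: "(complex \<Rightarrow> 'a::ab_group_add \<Rightarrow> 'a) \<Rightarrow> complex \<Rightarrow> 'a poly \<Rightarrow> 'a poly" where
  "pscale sc c A = map_poly (sc c) A"

definition Dop :: "'a::zero poly \<Rightarrow> 'a poly" where
  "Dop A = pCons 0 A"

text \<open>C[D] is even, so the grading of C[D] \<otimes> S is coefficientwise.\<close>
definition polypar :: "'a::zero set \<Rightarrow> 'a set \<Rightarrow> bool \<Rightarrow> 'a poly set" where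
  "polypar S0 S1 p = {A. \<forall>k. coeff A k \<in> par S0 S1 p}"

definition is_formula :: "(complex \<Rightarrow> 'a::ab_group_add \<Rightarrow> 'a) \<Rightarrow> 'a set \<Rightarrow> 'a set
     \<Rightarrow> (nat \<Rightarrow> 'a \<Rightarrow> 'a \<Rightarrow> 'a poly) \<Rightarrow> bool" where
  "is_formula sc S0 S1 F \<longleftrightarrow> graded_space sc S0 S1
     \<and> (\<forall>n. bilinear_map sc (pscale sc) (F n))
     \<and> (\<forall>n p q u v. u \<in> par S0 S1 p \<longrightarrow> v \<in> par S0 S1 q \<longrightarrow> F n u v \<in> polypar S0 S1 (p \<noteq> q))
     \<and> (\<forall>u v. \<exists>N. \<forall>n\<ge>N. F n u v = 0)"

text \<open>The extended products (D^a u)_n (D^b v), computed from the generating-function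
  formula  P(d/dz) Q(D - d/dz) sum_n (u_n v) z^(-n-1)  with P = x^a, Q = x^b:
  (D^a u)_n (D^b v) = (-1)^a sum_{j \<le> b, a+j \<le> n} (b choose j) n!/(n-a-j)! D^(b-j) (u_{n-a-j} v),
  extended bilinearly.\<close>
definition extprod :: "(complex \<Rightarrow> 'a::ab_group_add \<Rightarrow> 'a) \<Rightarrow> (nat \<Rightarrow> 'a \<Rightarrow> 'a \<Rightarrow> 'a poly)
     \<Rightarrow> nat \<Rightarrow> 'a poly \<Rightarrow> 'a poly \<Rightarrow> 'a poly" where
  "extprod sc F n A B =
     (\<Sum>a\<le>degree A. \<Sum>b\<le>degree B. \<Sum>j\<le>b.
        if a + j \<le> n then
          pscale sc ((-1) ^ a * of_nat (b choose j) * of_nat (fact n) / of_nat (fact (n - a - j)))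
            ((Dop ^^ (b - j)) (F (n - a - j) (coeff A a) (coeff B b)))
        else 0)"

definition vertex_Lie_superalgebra :: "(complex \<Rightarrow> 'b::ab_group_add \<Rightarrow> 'b) \<Rightarrow> 'b set \<Rightarrow> 'b set
     \<Rightarrow> ('b \<Rightarrow> 'b) \<Rightarrow> (nat \<Rightarrow> 'b \<Rightarrow> 'b \<Rightarrow> 'b) \<Rightarrow> bool" where
  "vertex_Lie_superalgebra sc U0 U1 D pr \<longleftrightarrow> graded_space sc U0 U1
     \<and> (\<forall>x y. D (x + y) = D x + D y) \<and> (\<forall>c x. D (sc c x) = sc c (D x))
     \<and> (\<forall>p x. x \<in> par U0 U1 p \<longrightarrow> D x \<in> par U0 U1 p)
     \<and> (\<forall>n. bilinear_map sc sc (pr n))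
     \<and> (\<forall>p q u v. u \<in> par U0 U1 p \<longrightarrow> v \<in> par U0 U1 q \<longrightarrow>
          (\<exists>N. \<forall>n\<ge>N. pr n u v = 0)
        \<and> (\<forall>n. pr n u v \<in> par U0 U1 (p \<noteq> q))
        \<and> pr 0 (D u) v = 0
        \<and> (\<forall>n. pr (Suc n) (D u) v = - sc (of_nat (Suc n)) (pr n u v))
        \<and> (\<forall>n. D (pr n u v) = pr n (D u) v + pr n u (D v))
        \<and> (\<forall>n M. (\<forall>k\<ge>M. pr (n + k) v u = 0) \<longrightarrow>
             pr n u v = - sc (eps p q)
               (\<Sum>k<M. sc ((-1) ^ (n + k) / of_nat (fact k)) ((D ^^ k) (pr (n + k) v u))))
        \<and> (\<forall>r w k m n. w \<in> par U0 U1 r \<longrightarrow>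
             (\<Sum>i\<le>k. sc ((-1) ^ i * of_nat (k choose i))
                 (pr (m + k - i) u (pr (n + i) v w)
                  - sc (eps p q * (-1) ^ k) (pr (n + k - i) v (pr (m + i) u w))))
             = (\<Sum>i\<le>m. sc (of_nat (m choose i)) (pr (m + n - i) (pr (k + i) u v) w))))"

definition Lie_superalgebra :: "(complex \<Rightarrow> 'a::ab_group_add \<Rightarrow> 'a) \<Rightarrow> 'a set \<Rightarrow> 'a set
     \<Rightarrow> ('a \<Rightarrow> 'a \<Rightarrow> 'a) \<Rightarrow> bool" where
  "Lie_superalgebra sc S0 S1 br \<longleftrightarrow> graded_space sc S0 S1 \<and> bilinear_map sc sc br
     \<and> (\<forall>p q r u v w. u \<in> par S0 S1 p \<longrightarrow> v \<in> par S0 S1 q \<longrightarrow> w \<in> par S0 S1 r \<longrightarrow>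
          br u v \<in> par S0 S1 (p \<noteq> q)
        \<and> br u v = - sc (eps p q) (br v u)
        \<and> br u (br v w) = br (br u v) w + sc (eps p q) (br v (br u w)))"

end

theory Submission
  imports Defs
begin

text \<open>If \<open>F_n = 0\<close> for \<open>n \<ge> 1\<close> and \<open>F_0\<close> is a bracket, the extended products are
  \<open>(D^a u)_n (D^b v) = c(a,b,n) D^(a+b-n) [u,v]\<close>, and they are translation covariant:
  \<open>(Du)_n v = -n u_(n-1) v\<close>, and \<open>D\<close> is a derivation of every product. Translation covariance
  alone turns the defects of skew-symmetry and of the commutator formula at \<open>(Du, v, w)\<close> or
  \<open>(u, Dv, w)\<close> into combinations of defects at \<open>(u, v, w)\<close> with shifted indices. As the defects
  are additive in each argument, they vanish on \<open>\<complex>[D] \<otimes> S\<close> once they vanish on \<open>S\<close>, where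
  they are the skew-symmetry and the Jacobi identity of the bracket.

  Conversely, let \<open>N \<ge> 1\<close> be maximal with \<open>F_N(v,u) \<noteq> 0\<close>. In the skew-symmetry formula for
  \<open>u_(N-1) v\<close> the coefficient of \<open>D\<close> is a nonzero multiple of \<open>F_N(v,u)\<close>, while the left side
  \<open>F_(N-1)(u,v)\<close> has degree zero. Hence \<open>F_n = 0\<close> for \<open>n \<ge> 1\<close>, and then skew-symmetry for
  \<open>n = 0\<close> and the commutator formula for \<open>k = m = n = 0\<close> are the Lie superalgebra axioms.\<close>

section \<open>Conformal algebras\<close>

context module
begin

lemma scale_of_nat_cong: "(m \<noteq> 0 \<Longrightarrow> x = y) \<Longrightarrow> scale (of_nat m) x = scale (of_nat m) y"
  by (cases "m = 0") simp_all

lemma sum_choose_absorb_comp: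
  "(\<Sum>i\<le>m. scale (of_nat ((m - i) * (m choose i))) (x i))
     = scale (of_nat m) (\<Sum>i\<le>m - 1. scale (of_nat (m - 1 choose i)) (x i))"
proof -
  have "(\<Sum>i\<le>m - 1. scale (of_nat (m * (m - 1 choose i))) (x i))
      = (\<Sum>i\<le>m. scale (of_nat (m * (m - 1 choose i))) (x i))"
    by (rule sum.mono_neutral_left) (auto simp: not_le binomial_eq_0 intro: ccontr)
  then show ?thesis
    by (simp only: binomial_absorb_comp) (simp add: scale_sum_right)
qed

lemma sum_choose_absorb_shift:
  "(\<Sum>i\<le>m. scale (of_nat (i * (m choose i))) (x i))
     = scale (of_nat m) (\<Sum>i\<le>m - 1. scale (of_nat (m - 1 choose i)) (x (Suc i)))"
proof (cases m)
  case (Suc m')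
  have "(\<Sum>i\<le>m. scale (of_nat (i * (m choose i))) (x i))
      = (\<Sum>i\<le>m'. scale (of_nat (Suc i * (m choose Suc i))) (x (Suc i)))"
    by (simp only: Suc sum.atMost_Suc_shift) simp
  also have "\<dots> = (\<Sum>i\<le>m'. scale (of_nat m) (scale (of_nat (m' choose i)) (x (Suc i))))"
    by (simp only: binomial_absorption Suc diff_Suc_1 of_nat_mult scale_scale)
  finally show ?thesis
    by (simp add: Suc scale_sum_right)
qed simp

end

text \<open>The axioms of a vertex Lie superalgebra other than skew-symmetry and the commutator
  formula, grading omitted. For \<open>j = 0\<close>, \<open>pr_D_left\<close> says \<open>(Du)\<^sub>0 v = 0\<close>.\<close>

locale conformal_algebra = module sc for sc :: "complex \<Rightarrow> 'b::ab_group_add \<Rightarrow> 'b" +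
  fixes D :: "'b \<Rightarrow> 'b" and pr :: "nat \<Rightarrow> 'b \<Rightarrow> 'b \<Rightarrow> 'b"
  assumes D_add: "D (x + y) = D x + D y"
    and D_scale: "D (sc c x) = sc c (D x)"
    and pr_add_left: "pr n (x + y) z = pr n x z + pr n y z"
    and pr_add_right: "pr n z (x + y) = pr n z x + pr n z y"
    and pr_scale_left: "pr n (sc c x) y = sc c (pr n x y)"
    and pr_scale_right: "pr n x (sc c y) = sc c (pr n x y)"
    and pr_D_left: "pr j (D u) v = - sc (of_nat j) (pr (j - 1) u v)"
    and D_pr: "D (pr n u v) = pr n (D u) v + pr n u (D v)"
    and locality: "\<exists>N. \<forall>j\<ge>N. pr j u v = 0"
begin

sublocale D: additive D
  by standard (rule D_add)

declare D.zero [simp]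

lemma pr_zero_left [simp]: "pr n 0 y = 0"
  and pr_minus_left: "pr n (- x) y = - pr n x y"
  and pr_diff_left: "pr n (x - x') y = pr n x y - pr n x' y"
proof -
  interpret additive "\<lambda>x. pr n x y" by standard (rule pr_add_left)
  show "pr n 0 y = 0" by (rule zero)
  show "pr n (- x) y = - pr n x y" by (rule minus)
  show "pr n (x - x') y = pr n x y - pr n x' y" by (rule diff)
qed

lemma pr_zero_right [simp]: "pr n y 0 = 0"
  and pr_minus_right: "pr n y (- x) = - pr n y x"
  and pr_diff_right: "pr n y (x - x') = pr n y x - pr n y x'"
proof -
  interpret additive "pr n y" by standard (rule pr_add_right)
  show "pr n y 0 = 0" by (rule zero)
  show "pr n y (- x) = - pr n y x" by (rule minus)
  show "pr n y (x - x') = pr n y x - pr n y x'" by (rule diff)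
qed

lemma pr_D_right: "pr j u (D v) = D (pr j u v) + sc (of_nat j) (pr (j - 1) u v)"
  using D_pr[of j u v] pr_D_left[of j u v] by (simp add: algebra_simps)

definition comm_lhs :: "'b \<Rightarrow> 'b \<Rightarrow> 'b \<Rightarrow> nat \<Rightarrow> nat \<Rightarrow> nat \<Rightarrow> 'b" where
  "comm_lhs u v w k m n = (\<Sum>i\<le>k. sc ((-1)^i * of_nat (k choose i)) (pr (m + k - i) u (pr (n + i) v w)))"

definition comm_rhs :: "'b \<Rightarrow> 'b \<Rightarrow> 'b \<Rightarrow> nat \<Rightarrow> nat \<Rightarrow> nat \<Rightarrow> 'b" where
  "comm_rhs u v w k m n = (\<Sum>i\<le>m. sc (of_nat (m choose i)) (pr (m + n - i) (pr (k + i) u v) w))"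

lemma comm_lhs_D_left:
  "comm_lhs (D u) v w k m n
     = - sc (of_nat m) (comm_lhs u v w k (m - 1) n) - sc (of_nat k) (comm_lhs u v w (k - 1) m n)"
proof -
  define x where "x i = sc ((-1)^i) (pr (m + k - i - 1) u (pr (n + i) v w))" for i
  have "comm_lhs (D u) v w k m n
      = - (\<Sum>i\<le>k. sc (of_nat m) (sc (of_nat (k choose i)) (x i)))
        - (\<Sum>i\<le>k. sc (of_nat ((k - i) * (k choose i))) (x i))"
    unfolding comm_lhs_def x_def sum_negf[symmetric] sum_subtractf[symmetric]
    by (intro sum.cong refl) (simp add: pr_D_left of_nat_diff algebra_simps)
  also have "(\<Sum>i\<le>k. sc (of_nat m) (sc (of_nat (k choose i)) (x i))) = sc (of_nat m) (comm_lhs u v w k (m - 1) n)"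
    unfolding scale_sum_right[symmetric]
    by (intro scale_of_nat_cong) (auto simp: comm_lhs_def x_def mult.commute intro!: sum.cong)
  also have "(\<Sum>i\<le>k. sc (of_nat ((k - i) * (k choose i))) (x i)) = sc (of_nat k) (comm_lhs u v w (k - 1) m n)"
    unfolding sum_choose_absorb_comp
    by (intro scale_of_nat_cong) (auto simp: comm_lhs_def x_def mult.commute intro!: sum.cong)
  finally show ?thesis .
qed

lemma comm_lhs_D_middle:
  "comm_lhs u (D v) w k m n
     = - sc (of_nat n) (comm_lhs u v w k m (n - 1)) + sc (of_nat k) (comm_lhs u v w (k - 1) m n)"
proof -
  define x where "x i = sc ((-1)^i) (pr (m + k - i) u (pr (n + i - 1) v w))" for i
  have "comm_lhs u (D v) w k m n
      = - (\<Sum>i\<le>k. sc (of_nat n) (sc (of_nat (k choose i)) (x i)))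
        - (\<Sum>i\<le>k. sc (of_nat (i * (k choose i))) (x i))"
    unfolding comm_lhs_def x_def sum_negf[symmetric] sum_subtractf[symmetric]
    by (intro sum.cong refl) (simp add: pr_D_left pr_minus_right pr_diff_right pr_scale_right algebra_simps)
  also have "(\<Sum>i\<le>k. sc (of_nat n) (sc (of_nat (k choose i)) (x i))) = sc (of_nat n) (comm_lhs u v w k m (n - 1))"
    unfolding scale_sum_right[symmetric]
    by (intro scale_of_nat_cong) (auto simp: comm_lhs_def x_def mult.commute intro!: sum.cong)
  also have "(\<Sum>i\<le>k. sc (of_nat (i * (k choose i))) (x i)) = - sc (of_nat k) (comm_lhs u v w (k - 1) m n)"
    unfolding sum_choose_absorb_shift scale_minus_right[symmetric]
    by (intro scale_of_nat_cong)
      (auto simp: comm_lhs_def x_def mult.commute sum_negf[symmetric] intro!: sum.cong)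
  finally show ?thesis by simp
qed

lemma comm_rhs_D_left:
  "comm_rhs (D u) v w k m n
     = - sc (of_nat m) (comm_rhs u v w k (m - 1) n) - sc (of_nat k) (comm_rhs u v w (k - 1) m n)"
proof -
  define z where "z i = pr (m + n - i) (pr (k + i - 1) u v) w" for i
  have "comm_rhs (D u) v w k m n
      = - (\<Sum>i\<le>m. sc (of_nat (i * (m choose i))) (z i))
        - (\<Sum>i\<le>m. sc (of_nat k) (sc (of_nat (m choose i)) (z i)))"
    unfolding comm_rhs_def z_def sum_negf[symmetric] sum_subtractf[symmetric]
    by (intro sum.cong refl) (simp add: pr_D_left pr_minus_left pr_diff_left pr_scale_left algebra_simps)
  also have "(\<Sum>i\<le>m. sc (of_nat (i * (m choose i))) (z i)) = sc (of_nat m) (comm_rhs u v w k (m - 1) n)"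
    unfolding sum_choose_absorb_shift
    by (intro scale_of_nat_cong) (auto simp: comm_rhs_def z_def intro!: sum.cong)
  also have "(\<Sum>i\<le>m. sc (of_nat k) (sc (of_nat (m choose i)) (z i))) = sc (of_nat k) (comm_rhs u v w (k - 1) m n)"
    unfolding scale_sum_right[symmetric]
    by (intro scale_of_nat_cong) (auto simp: comm_rhs_def z_def intro!: sum.cong)
  finally show ?thesis .
qed

lemma comm_rhs_D_middle:
  "comm_rhs u (D v) w k m n
     = - sc (of_nat n) (comm_rhs u v w k m (n - 1)) + sc (of_nat k) (comm_rhs u v w (k - 1) m n)"
proof -
  define y where "y i = pr (m + n - i - 1) (pr (k + i) u v) w" for i
  define z where "z i = pr (m + n - i) (pr (k + i - 1) u v) w" for i
  have "comm_rhs u (D v) w k m n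
      = - (\<Sum>i\<le>m. sc (of_nat n) (sc (of_nat (m choose i)) (y i)))
        - (\<Sum>i\<le>m. sc (of_nat ((m - i) * (m choose i))) (y i))
        + (\<Sum>i\<le>m. sc (of_nat k) (sc (of_nat (m choose i)) (z i)))
        + (\<Sum>i\<le>m. sc (of_nat (i * (m choose i))) (z i))"
    unfolding comm_rhs_def y_def z_def sum_negf[symmetric] sum_subtractf[symmetric] sum.distrib[symmetric]
    by (intro sum.cong refl)
      (simp add: pr_D_right pr_add_left pr_D_left pr_minus_left pr_scale_left of_nat_diff algebra_simps)
  also have "(\<Sum>i\<le>m. sc (of_nat ((m - i) * (m choose i))) (y i)) = (\<Sum>i\<le>m. sc (of_nat (i * (m choose i))) (z i))"
    unfolding sum_choose_absorb_comp sum_choose_absorb_shift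
    by (intro scale_of_nat_cong) (auto simp: y_def z_def intro!: sum.cong)
  also have "(\<Sum>i\<le>m. sc (of_nat n) (sc (of_nat (m choose i)) (y i))) = sc (of_nat n) (comm_rhs u v w k m (n - 1))"
    unfolding scale_sum_right[symmetric]
    by (intro scale_of_nat_cong) (auto simp: comm_rhs_def y_def intro!: sum.cong)
  also have "(\<Sum>i\<le>m. sc (of_nat k) (sc (of_nat (m choose i)) (z i))) = sc (of_nat k) (comm_rhs u v w (k - 1) m n)"
    unfolding scale_sum_right[symmetric]
    by (intro scale_of_nat_cong) (auto simp: comm_rhs_def z_def intro!: sum.cong)
  finally show ?thesis by simp
qed

lemma comm_lhs_D_right:
  "comm_lhs u v (D w) k m n = D (comm_lhs u v w k m n) - comm_lhs (D u) v w k m n - comm_lhs u (D v) w k m n"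
  unfolding comm_lhs_def D.sum D_scale D_pr pr_add_right scale_right_distrib sum.distrib by simp

lemma comm_rhs_D_right:
  "comm_rhs u v (D w) k m n = D (comm_rhs u v w k m n) - comm_rhs (D u) v w k m n - comm_rhs u (D v) w k m n"
  unfolding comm_rhs_def D.sum D_scale D_pr pr_add_left scale_right_distrib sum.distrib by simp

definition jacobi_defect :: "complex \<Rightarrow> 'b \<Rightarrow> 'b \<Rightarrow> 'b \<Rightarrow> nat \<Rightarrow> nat \<Rightarrow> nat \<Rightarrow> 'b" where
  "jacobi_defect s u v w k m n
     = comm_lhs u v w k m n - sc (s * (-1)^k) (comm_lhs v u w k n m) - comm_rhs u v w k m n"

lemma jacobi_defect_eq:
  "(\<Sum>i\<le>k. sc ((-1) ^ i * of_nat (k choose i))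
       (pr (m + k - i) u (pr (n + i) v w) - sc (s * (-1) ^ k) (pr (n + k - i) v (pr (m + i) u w))))
     - (\<Sum>i\<le>m. sc (of_nat (m choose i)) (pr (m + n - i) (pr (k + i) u v) w))
   = jacobi_defect s u v w k m n"
  unfolding jacobi_defect_def comm_lhs_def comm_rhs_def
  by (simp add: scale_right_diff_distrib sum_subtractf scale_sum_right mult.commute mult.left_commute)

lemma jacobi_defect_add:
  "jacobi_defect s (x + y) v w k m n = jacobi_defect s x v w k m n + jacobi_defect s y v w k m n"
  "jacobi_defect s u (x + y) w k m n = jacobi_defect s u x w k m n + jacobi_defect s u y w k m n"
  "jacobi_defect s u v (x + y) k m n = jacobi_defect s u v x k m n + jacobi_defect s u v y k m n"
  unfolding jacobi_defect_def comm_lhs_def comm_rhs_def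
  by (simp_all add: pr_add_left pr_add_right scale_right_distrib sum.distrib algebra_simps)

lemma jacobi_defect_D_left:
  "jacobi_defect s (D u) v w k m n
     = - sc (of_nat m) (jacobi_defect s u v w k (m - 1) n) - sc (of_nat k) (jacobi_defect s u v w (k - 1) m n)"
proof -
  have "sc (of_nat k) (sc (s * (-1) ^ (k - 1)) x) = - sc (of_nat k) (sc (s * (-1) ^ k) x)" for x
    by (cases k) simp_all
  then show ?thesis
    unfolding jacobi_defect_def comm_lhs_D_left comm_lhs_D_middle comm_rhs_D_left
    by (simp add: algebra_simps)
qed

lemma jacobi_defect_D_middle:
  "jacobi_defect s u (D v) w k m n
     = - sc (of_nat n) (jacobi_defect s u v w k m (n - 1)) + sc (of_nat k) (jacobi_defect s u v w (k - 1) m n)"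
proof -
  have "sc (of_nat k) (sc (s * (-1) ^ (k - 1)) x) = - sc (of_nat k) (sc (s * (-1) ^ k) x)" for x
    by (cases k) simp_all
  then show ?thesis
    unfolding jacobi_defect_def comm_lhs_D_left comm_lhs_D_middle comm_rhs_D_middle
    by (simp add: algebra_simps)
qed

lemma jacobi_defect_D_right:
  "jacobi_defect s u v (D w) k m n
     = D (jacobi_defect s u v w k m n) - jacobi_defect s (D u) v w k m n - jacobi_defect s u (D v) w k m n"
  unfolding jacobi_defect_def comm_lhs_D_right comm_rhs_D_right D.diff D_scale
  by (simp add: algebra_simps)

definition jacobi_identity :: "complex \<Rightarrow> 'b \<Rightarrow> 'b \<Rightarrow> 'b \<Rightarrow> bool" where
  "jacobi_identity s u v w \<longleftrightarrow> (\<forall>k m n. jacobi_defect s u v w k m n = 0)"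

lemma jacobi_identity_D:
  assumes "jacobi_identity s u v w"
  shows "jacobi_identity s (D u) v w" "jacobi_identity s u (D v) w" "jacobi_identity s u v (D w)"
  using assms
  by (simp_all add: jacobi_identity_def jacobi_defect_D_left jacobi_defect_D_middle jacobi_defect_D_right)

lemma jacobi_identity_funpow:
  assumes "jacobi_identity s u v w"
  shows "jacobi_identity s ((D ^^ a) u) ((D ^^ b) v) ((D ^^ c) w)"
proof -
  have "jacobi_identity s ((D ^^ a) u) v w"
    using assms by (induction a) (simp_all add: jacobi_identity_D)
  then have "jacobi_identity s ((D ^^ a) u) ((D ^^ b) v) w"
    by (induction b) (simp_all add: jacobi_identity_D)
  then show ?thesis
    by (induction c) (simp_all add: jacobi_identity_D)
qed

lemma funpow_D_add: "(D ^^ k) (x + y) = (D ^^ k) x + (D ^^ k) y"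
  and funpow_D_scale: "(D ^^ k) (sc c x) = sc c ((D ^^ k) x)"
  and funpow_D_minus: "(D ^^ k) (- x) = - (D ^^ k) x"
  and funpow_D_diff: "(D ^^ k) (x - y) = (D ^^ k) x - (D ^^ k) y"
  and funpow_D_zero [simp]: "(D ^^ k) 0 = 0"
  by (induction k) (simp_all add: D_add D_scale D.minus D.diff)

definition skew_coeff :: "nat \<Rightarrow> nat \<Rightarrow> complex" where
  "skew_coeff n k = (-1) ^ (n + k) / of_nat (fact k)"

lemma skew_coeff_Suc: "of_nat (Suc k) * skew_coeff n (Suc k) = - skew_coeff n k"
proof -
  have "(of_nat (Suc k) :: complex) \<noteq> 0" by (simp only: of_nat_eq_0_iff)
  then show ?thesis
    unfolding skew_coeff_def fact_Suc of_nat_mult by (simp add: field_simps del: of_nat_Suc)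
qed

definition skew_defect :: "complex \<Rightarrow> 'b \<Rightarrow> 'b \<Rightarrow> nat \<Rightarrow> nat \<Rightarrow> 'b" where
  "skew_defect s u v n K = pr n u v + sc s (\<Sum>k<K. sc (skew_coeff n k) ((D ^^ k) (pr (n + k) v u)))"

lemma skew_defect_add:
  "skew_defect s (x + y) v n K = skew_defect s x v n K + skew_defect s y v n K"
  "skew_defect s u (x + y) n K = skew_defect s u x n K + skew_defect s u y n K"
  unfolding skew_defect_def
  by (simp_all add: pr_add_left pr_add_right funpow_D_add scale_right_distrib sum.distrib algebra_simps)

lemma skew_defect_cutoff:
  assumes "\<forall>k\<ge>K. pr (n + k) v u = 0" and "K \<le> K'"
  shows "skew_defect s u v n K' = skew_defect s u v n K"
proof -
  have "(\<Sum>k<K'. sc (skew_coeff n k) ((D ^^ k) (pr (n + k) v u)))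
      = (\<Sum>k<K. sc (skew_coeff n k) ((D ^^ k) (pr (n + k) v u)))"
    by (rule sum.mono_neutral_right) (use assms in auto)
  then show ?thesis
    unfolding skew_defect_def by simp
qed

lemma D_skew_sum:
  assumes "pr (n + K) v u = 0"
  shows "D (\<Sum>k<Suc K. sc (skew_coeff n k) ((D ^^ k) (pr (n + k) v u)))
    = - (\<Sum>k<Suc K. sc (of_nat k * skew_coeff n k) ((D ^^ k) (pr (n + k - 1) v u)))"
proof -
  have "D (\<Sum>k<Suc K. sc (skew_coeff n k) ((D ^^ k) (pr (n + k) v u)))
      = (\<Sum>k<K. sc (skew_coeff n k) ((D ^^ Suc k) (pr (n + Suc k - 1) v u)))"
    using assms by (simp add: D.sum D_scale funpow_swap1)
  also have "\<dots> = - (\<Sum>k<K. sc (of_nat (Suc k) * skew_coeff n (Suc k)) ((D ^^ Suc k) (pr (n + Suc k - 1) v u)))"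
    by (simp only: skew_coeff_Suc scale_minus_left sum_negf minus_minus)
  finally show ?thesis
    by (simp only: sum.lessThan_Suc_shift) simp
qed

lemma skew_coeff_Suc_left: "skew_coeff (Suc n) k = - skew_coeff n k"
  by (simp add: skew_coeff_def)

lemma skew_sum_pred:
  "sc (of_nat n) (\<Sum>k<K. sc (skew_coeff n k) ((D ^^ k) (pr (n + k - 1) v u)))
     = - sc (of_nat n) (\<Sum>k<K. sc (skew_coeff (n - 1) k) ((D ^^ k) (pr (n - 1 + k) v u)))"
  by (cases n) (simp_all add: skew_coeff_Suc_left sum_negf)

lemma skew_defect_D_left:
  assumes "\<forall>j\<ge>K. pr j v u = 0"
  shows "skew_defect s (D u) v n (Suc K) = - sc (of_nat n) (skew_defect s u v (n - 1) (Suc K))"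
proof -
  define y where "y k = (D ^^ k) (pr (n + k - 1) v u)" for k
  have "(\<Sum>k<Suc K. sc (skew_coeff n k) ((D ^^ k) (pr (n + k) v (D u))))
      = D (\<Sum>k<Suc K. sc (skew_coeff n k) ((D ^^ k) (pr (n + k) v u)))
        + (\<Sum>k<Suc K. sc (of_nat (n + k) * skew_coeff n k) (y k))"
    unfolding y_def D.sum D_scale sum.distrib[symmetric]
    by (intro sum.cong refl)
      (simp add: pr_D_right funpow_D_add funpow_D_scale funpow_swap1 scale_right_distrib algebra_simps)
  also have "\<dots> = sc (of_nat n) (\<Sum>k<Suc K. sc (skew_coeff n k) (y k))"
    unfolding D_skew_sum[OF assms[rule_format, OF le_add2]] y_def[symmetric] scale_sum_right
      sum_negf[symmetric] sum.distrib[symmetric]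
    by (intro sum.cong refl) (simp add: algebra_simps)
  finally have sum_D: "(\<Sum>k<Suc K. sc (skew_coeff n k) ((D ^^ k) (pr (n + k) v (D u))))
      = - sc (of_nat n) (\<Sum>k<Suc K. sc (skew_coeff (n - 1) k) ((D ^^ k) (pr (n - 1 + k) v u)))"
    unfolding y_def skew_sum_pred .
  show ?thesis
    unfolding skew_defect_def pr_D_left sum_D by (simp add: algebra_simps)
qed

lemma skew_defect_D_right:
  assumes "\<forall>j\<ge>K. pr j v u = 0"
  shows "skew_defect s u (D v) n (Suc K)
    = D (skew_defect s u v n (Suc K)) + sc (of_nat n) (skew_defect s u v (n - 1) (Suc K))"
proof -
  define y where "y k = (D ^^ k) (pr (n + k - 1) v u)" for k
  have "(\<Sum>k<Suc K. sc (skew_coeff n k) ((D ^^ k) (pr (n + k) (D v) u)))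
      = - (\<Sum>k<Suc K. sc (of_nat k * skew_coeff n k) (y k)) - sc (of_nat n) (\<Sum>k<Suc K. sc (skew_coeff n k) (y k))"
    unfolding y_def scale_sum_right sum_negf[symmetric] sum_subtractf[symmetric]
    by (intro sum.cong refl) (simp add: pr_D_left funpow_D_minus funpow_D_diff funpow_D_scale algebra_simps)
  also have "\<dots> = D (\<Sum>k<Suc K. sc (skew_coeff n k) ((D ^^ k) (pr (n + k) v u)))
      + sc (of_nat n) (\<Sum>k<Suc K. sc (skew_coeff (n - 1) k) ((D ^^ k) (pr (n - 1 + k) v u)))"
    unfolding D_skew_sum[OF assms[rule_format, OF le_add2]] y_def skew_sum_pred by simp
  finally show ?thesis
    unfolding skew_defect_def pr_D_right D_add D_scale by (simp add: algebra_simps)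
qed

definition skew_symmetry :: "complex \<Rightarrow> 'b \<Rightarrow> 'b \<Rightarrow> bool" where
  "skew_symmetry s u v \<longleftrightarrow> (\<forall>n K. (\<forall>k\<ge>K. pr (n + k) v u = 0) \<longrightarrow> skew_defect s u v n K = 0)"

lemma skew_symmetry_D:
  assumes "skew_symmetry s u v"
  shows "skew_symmetry s (D u) v" and "skew_symmetry s u (D v)"
proof -
  obtain N where N: "\<forall>j\<ge>N. pr j v u = 0"
    using locality by blast
  let ?K = "\<lambda>K. Suc (max K N)"
  have N_le: "\<forall>j\<ge>max K N. pr j v u = 0" for K
    using N by simp
  have vanish: "skew_defect s u v n (?K K) = 0" for n K
    using assms N unfolding skew_symmetry_def by simp
  show "skew_symmetry s (D u) v"
    unfolding skew_symmetry_def
  proof (intro allI impI)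
    fix n K assume "\<forall>k\<ge>K. pr (n + k) v (D u) = 0"
    then have "skew_defect s (D u) v n K = skew_defect s (D u) v n (?K K)"
      by (rule skew_defect_cutoff[symmetric]) simp
    then show "skew_defect s (D u) v n K = 0"
      by (simp add: skew_defect_D_left[OF N_le] vanish)
  qed
  show "skew_symmetry s u (D v)"
    unfolding skew_symmetry_def
  proof (intro allI impI)
    fix n K assume "\<forall>k\<ge>K. pr (n + k) (D v) u = 0"
    then have "skew_defect s u (D v) n K = skew_defect s u (D v) n (?K K)"
      by (rule skew_defect_cutoff[symmetric]) simp
    then show "skew_defect s u (D v) n K = 0"
      by (simp add: skew_defect_D_right[OF N_le] vanish)
  qed
qed

lemma skew_symmetry_funpow:
  assumes "skew_symmetry s u v"
  shows "skew_symmetry s ((D ^^ a) u) ((D ^^ b) v)"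
proof -
  have "skew_symmetry s ((D ^^ a) u) v"
    using assms by (induction a) (simp_all add: skew_symmetry_D)
  then show ?thesis
    by (induction b) (simp_all add: skew_symmetry_D)
qed

end

section \<open>Polynomials over a graded space\<close>

lemma coeff_pscale: "module sc \<Longrightarrow> coeff (pscale sc c A) k = sc c (coeff A k)"
  unfolding pscale_def by (simp add: coeff_map_poly module.scale_zero_right)

lemma module_pscale:
  assumes "module sc"
  shows "module (pscale sc)"
  by standard (use assms in \<open>simp_all add: poly_eq_iff coeff_pscale module.scale_right_distrib
      module.scale_left_distrib module.scale_scale module.scale_one\<close>)

lemma pscale_monom: "module sc \<Longrightarrow> pscale sc c (monom x k) = monom (sc c x) k"
  by (simp add: poly_eq_iff coeff_pscale module.scale_zero_right)

lemma pscale_const: "module sc \<Longrightarrow> pscale sc c [:x:] = [:sc c x:]"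
  by (simp add: pscale_monom monom_0[symmetric])

lemma Dop_add: "Dop (x + y) = Dop x + Dop y"
  by (simp add: Dop_def)

lemma Dop_pscale: "module sc \<Longrightarrow> Dop (pscale sc c x) = pscale sc c (Dop x)"
  by (simp add: poly_eq_iff coeff_pscale Dop_def coeff_pCons module.scale_zero_right split: nat.splits)

lemma Dop_monom: "Dop (monom x k) = monom x (Suc k)"
  by (simp add: Dop_def monom_Suc)

lemma funpow_Dop_zero [simp]: "(Dop ^^ k) 0 = 0"
  by (induction k) (simp_all add: Dop_def)

lemma funpow_Dop_const: "(Dop ^^ k) [:x:] = monom x k"
  by (induction k) (simp_all add: monom_0 Dop_monom)

lemma poly_additive_eq_0:
  fixes \<Phi> :: "'a::ab_group_add poly \<Rightarrow> 'b::ab_group_add"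
  assumes "\<And>x y. \<Phi> (x + y) = \<Phi> x + \<Phi> y"
    and "\<And>u a. u \<in> P \<Longrightarrow> a \<le> degree A \<Longrightarrow> \<Phi> (monom u a) = 0"
    and "\<And>k. coeff A k \<in> P"
  shows "\<Phi> A = 0"
proof -
  interpret additive \<Phi> by standard (rule assms(1))
  have "\<Phi> A = (\<Sum>i\<le>degree A. \<Phi> (monom (coeff A i) i))"
    by (subst poly_as_sum_of_monoms[symmetric]) (rule sum)
  also have "\<dots> = 0" using assms(2,3) by simp
  finally show ?thesis .
qed

lemma poly_biadditive_eq_0:
  fixes \<Phi> :: "'a::ab_group_add poly \<Rightarrow> 'c::ab_group_add poly \<Rightarrow> 'b::ab_group_add"
  assumes "\<And>x y B. \<Phi> (x + y) B = \<Phi> x B + \<Phi> y B"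
    and "\<And>A x y. \<Phi> A (x + y) = \<Phi> A x + \<Phi> A y"
    and "\<And>u v a b. u \<in> P \<Longrightarrow> v \<in> Q \<Longrightarrow> a \<le> degree A \<Longrightarrow> b \<le> degree B
      \<Longrightarrow> \<Phi> (monom u a) (monom v b) = 0"
    and "\<And>k. coeff A k \<in> P" and "\<And>k. coeff B k \<in> Q"
  shows "\<Phi> A B = 0"
  by (rule poly_additive_eq_0[where \<Phi>="\<lambda>A. \<Phi> A B" and P=P])
    (use assms in \<open>auto intro: poly_additive_eq_0[where P=Q]\<close>)

lemma par_polypar: "par (polypar S0 S1 False) (polypar S0 S1 True) p = polypar S0 S1 p"
  by (simp add: par_def)

lemma subspace_par: "graded_space sc S0 S1 \<Longrightarrow> module.subspace sc (par S0 S1 p)"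
  unfolding graded_space_def par_def by auto

lemma zero_in_par: "graded_space sc S0 S1 \<Longrightarrow> 0 \<in> par S0 S1 p"
  using module.subspace_0[OF _ subspace_par] unfolding graded_space_def by blast

lemma subspace_polypar:
  assumes "graded_space sc S0 S1"
  shows "module.subspace (pscale sc) (polypar S0 S1 p)"
proof -
  have m: "module sc" using assms unfolding graded_space_def by simp
  have s: "module.subspace sc (par S0 S1 p)" by (rule subspace_par[OF assms])
  show ?thesis
    unfolding module.subspace_def[OF module_pscale[OF m]] polypar_def
    using module.subspace_0[OF m s] module.subspace_add[OF m s] module.subspace_scale[OF m s]
    by (auto simp: coeff_pscale[OF m])
qed

lemma const_in_polypar: "graded_space sc S0 S1 \<Longrightarrow> [:u:] \<in> polypar S0 S1 p \<longleftrightarrow> u \<in> par S0 S1 p"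
  using zero_in_par unfolding polypar_def by (fastforce simp: coeff_pCons split: nat.splits)

lemma monom_in_polypar: "graded_space sc S0 S1 \<Longrightarrow> u \<in> par S0 S1 p \<Longrightarrow> monom u a \<in> polypar S0 S1 p"
  using zero_in_par unfolding polypar_def by auto

lemma Dop_in_polypar: "graded_space sc S0 S1 \<Longrightarrow> x \<in> polypar S0 S1 p \<Longrightarrow> Dop x \<in> polypar S0 S1 p"
  using zero_in_par unfolding polypar_def Dop_def by (auto simp: coeff_pCons split: nat.splits)

lemma graded_space_poly:
  assumes g: "graded_space sc S0 S1"
  shows "graded_space (pscale sc) (polypar S0 S1 False) (polypar S0 S1 True)"
proof -
  have m: "module sc" and int: "S0 \<inter> S1 = {0}" and dec: "\<forall>x. \<exists>a\<in>S0. \<exists>b\<in>S1. x = a + b"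
    using g unfolding graded_space_def by auto
  have zero: "0 \<in> S0" "0 \<in> S1"
    using zero_in_par[OF g, of False] zero_in_par[OF g, of True] by (simp_all add: par_def)
  have "\<forall>y. \<exists>a. a \<in> S0 \<and> y - a \<in> S1"
  proof
    fix y
    obtain a b where "a \<in> S0" "b \<in> S1" "y = a + b" using dec by blast
    then show "\<exists>a. a \<in> S0 \<and> y - a \<in> S1" by auto
  qed
  then obtain e where e: "\<And>y. e y \<in> S0 \<and> y - e y \<in> S1"
    by metis
  define e0 where "e0 y = (if y = 0 then 0 else e y)" for y
  have e0: "e0 y \<in> S0" "y - e0 y \<in> S1" for y
    using e zero by (simp_all add: e0_def)
  have inter: "polypar S0 S1 False \<inter> polypar S0 S1 True = {0}"
  proof -
    have "x = 0" if "x \<in> polypar S0 S1 False" "x \<in> polypar S0 S1 True" for x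
      using that int unfolding polypar_def par_def poly_eq_iff by auto
    then show ?thesis
      using zero by (auto simp: polypar_def par_def)
  qed
  have "\<exists>a\<in>polypar S0 S1 False. \<exists>b\<in>polypar S0 S1 True. x = a + b" for x :: "'a poly"
  proof -
    define A where "A = (\<Sum>i\<le>degree x. monom (e0 (coeff x i)) i)"
    have "coeff A k = e0 (coeff x k)" for k
      unfolding A_def coeff_sum by (cases "k \<le> degree x") (simp_all add: coeff_eq_0 e0_def)
    then have "A \<in> polypar S0 S1 False" "x - A \<in> polypar S0 S1 True"
      using e0 by (simp_all add: polypar_def par_def)
    then show ?thesis by force
  qed
  then show ?thesis
    unfolding graded_space_def
    using module_pscale[OF m] subspace_polypar[OF g, of False] subspace_polypar[OF g, of True] inter by blast
qed

section \<open>The extended products of a bracket\<close>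

definition ext_coeff :: "nat \<Rightarrow> nat \<Rightarrow> nat \<Rightarrow> complex" where
  "ext_coeff a b n
     = (if a \<le> n \<and> n \<le> a + b then (-1) ^ a * of_nat (b choose (n - a)) * of_nat (fact n) else 0)"

lemma ext_coeff_Suc_left: "ext_coeff (Suc a) b n = - of_nat n * ext_coeff a b (n - 1)"
  unfolding ext_coeff_def by (cases n) (auto simp: fact_Suc algebra_simps)

lemma ext_coeff_Pascal: "ext_coeff a b n = ext_coeff (Suc a) b n + ext_coeff a (Suc b) n"
proof (cases "a \<le> n")
  case True
  then obtain r where r: "n = a + r" using le_Suc_ex by blast
  show ?thesis
  proof (cases r)
    case (Suc r')
    have "(Suc b choose Suc r') = (b choose r') + (b choose Suc r')" by simp
    then show ?thesis
      unfolding ext_coeff_def r Suc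
      by (cases "Suc r' \<le> b"; cases "r' \<le> b") (auto simp: binomial_eq_0 algebra_simps)
  qed (simp add: ext_coeff_def r)
qed (auto simp: ext_coeff_def)

lemma extprod_const:
  assumes "module sc"
  shows "extprod sc F n [:u:] [:v:] = F n u v"
  using module.scale_one[OF module_pscale[OF assms]] by (simp add: extprod_def)

context
  fixes sc :: "complex \<Rightarrow> 'a::ab_group_add \<Rightarrow> 'a" and br :: "'a \<Rightarrow> 'a \<Rightarrow> 'a"
    and F :: "nat \<Rightarrow> 'a \<Rightarrow> 'a \<Rightarrow> 'a poly"
  assumes module_sc: "module sc"
    and bilinear_br: "bilinear_map sc sc br"
    and F_bracket: "\<And>n u v. F n u v = (if n = 0 then [:br u v:] else 0)"
begin

interpretation P: module "pscale sc"
  by (rule module_pscale[OF module_sc])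

lemma br_add_left: "br (x + y) z = br x z + br y z"
  and br_add_right: "br z (x + y) = br z x + br z y"
  and br_scale_left: "br (sc c x) y = sc c (br x y)"
  and br_scale_right: "br x (sc c y) = sc c (br x y)"
  using bilinear_br unfolding bilinear_map_def by blast+

lemma br_zero [simp]: "br 0 y = 0" "br y 0 = 0"
  using br_add_left[of 0 0 y] br_add_right[of y 0 0] by simp_all

definition ext_term :: "nat \<Rightarrow> 'a poly \<Rightarrow> 'a poly \<Rightarrow> nat \<Rightarrow> nat \<Rightarrow> 'a poly" where
  "ext_term n A B a b = pscale sc (ext_coeff a b n) (monom (br (coeff A a) (coeff B b)) (a + b - n))"

lemma extprod_eq_sum: "extprod sc F n A B = (\<Sum>a\<le>degree A. \<Sum>b\<le>degree B. ext_term n A B a b)"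
proof -
  have "(\<Sum>j\<le>b. if a + j \<le> n then pscale sc ((-1)^a * of_nat (b choose j) * of_nat (fact n) / of_nat (fact (n - a - j)))
        ((Dop ^^ (b - j)) (F (n - a - j) x y)) else 0)
      = pscale sc (ext_coeff a b n) (monom (br x y) (a + b - n))" for a b x y
  proof -
    have "(\<Sum>j\<le>b. if a + j \<le> n then pscale sc ((-1)^a * of_nat (b choose j) * of_nat (fact n) / of_nat (fact (n - a - j)))
        ((Dop ^^ (b - j)) (F (n - a - j) x y)) else 0)
      = (\<Sum>j\<le>b. if j = n - a \<and> a \<le> n then pscale sc (ext_coeff a b n) (monom (br x y) (a + b - n)) else 0)"
      by (intro sum.cong refl) (auto simp: F_bracket funpow_Dop_const ext_coeff_def)
    then show ?thesis
      by (auto simp: ext_coeff_def)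
  qed
  then show ?thesis
    unfolding extprod_def ext_term_def by simp
qed

lemma extprod_eq_sum_upto:
  assumes "degree A \<le> NA" "degree B \<le> NB"
  shows "extprod sc F n A B = (\<Sum>a\<le>NA. \<Sum>b\<le>NB. ext_term n A B a b)"
proof -
  have "(\<Sum>a\<le>NA. \<Sum>b\<le>NB. ext_term n A B a b) = (\<Sum>a\<le>degree A. \<Sum>b\<le>NB. ext_term n A B a b)"
    by (rule sum.mono_neutral_right) (use assms in \<open>auto simp: ext_term_def coeff_eq_0\<close>)
  also have "\<dots> = (\<Sum>a\<le>degree A. \<Sum>b\<le>degree B. ext_term n A B a b)"
    by (intro sum.cong refl sum.mono_neutral_right) (use assms in \<open>auto simp: ext_term_def coeff_eq_0\<close>)
  finally show ?thesis
    unfolding extprod_eq_sum by simp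
qed

lemma extprod_add_left: "extprod sc F n (A + A') B = extprod sc F n A B + extprod sc F n A' B"
proof -
  define N where "N = max (degree A) (degree A')"
  have "degree A \<le> N" "degree A' \<le> N" "degree (A + A') \<le> N"
    unfolding N_def by (auto intro: degree_add_le)
  then show ?thesis
    by (simp add: extprod_eq_sum_upto[OF _ order.refl] sum.distrib[symmetric] ext_term_def
        br_add_left add_monom[symmetric] P.scale_right_distrib)
qed

lemma extprod_add_right: "extprod sc F n B (A + A') = extprod sc F n B A + extprod sc F n B A'"
proof -
  define N where "N = max (degree A) (degree A')"
  have "degree A \<le> N" "degree A' \<le> N" "degree (A + A') \<le> N"
    unfolding N_def by (auto intro: degree_add_le)
  then show ?thesis
    by (simp add: extprod_eq_sum_upto[OF order.refl] sum.distrib[symmetric] ext_term_def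
        br_add_right add_monom[symmetric] P.scale_right_distrib)
qed

lemma degree_pscale: "degree (pscale sc c A) \<le> degree A"
  by (rule degree_le) (simp add: coeff_pscale[OF module_sc] coeff_eq_0 module.scale_zero_right[OF module_sc])

lemma ext_term_scale:
  "ext_term n (pscale sc c A) B a b = pscale sc c (ext_term n A B a b)"
  "ext_term n B (pscale sc c A) a b = pscale sc c (ext_term n B A a b)"
  unfolding ext_term_def coeff_pscale[OF module_sc] br_scale_left br_scale_right
    pscale_monom[OF module_sc, symmetric]
  by (simp_all add: mult.commute)

lemma extprod_scale_left: "extprod sc F n (pscale sc c A) B = pscale sc c (extprod sc F n A B)"
  unfolding extprod_eq_sum_upto[OF degree_pscale order.refl]
  by (simp add: ext_term_scale P.scale_sum_right extprod_eq_sum)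

lemma extprod_scale_right: "extprod sc F n B (pscale sc c A) = pscale sc c (extprod sc F n B A)"
  unfolding extprod_eq_sum_upto[OF order.refl degree_pscale]
  by (simp add: ext_term_scale P.scale_sum_right extprod_eq_sum)

lemma extprod_monom:
  "extprod sc F n (monom u a) (monom v b) = pscale sc (ext_coeff a b n) (monom (br u v) (a + b - n))"
  (is "_ = ?X")
proof -
  have ext_term_monom: "ext_term n (monom u a) (monom v b) a' b' = (if a' = a then if b' = b then ?X else 0 else 0)"
    for a' b'
    by (auto simp: ext_term_def)
  have "extprod sc F n (monom u a) (monom v b) = (\<Sum>a'\<le>a. \<Sum>b'\<le>b. ext_term n (monom u a) (monom v b) a' b')"
    by (rule extprod_eq_sum_upto) (simp_all add: degree_monom_le)
  also have "\<dots> = (\<Sum>a'\<le>a. if a' = a then ?X else 0)"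
    by (intro sum.cong refl) (simp add: ext_term_monom)
  finally show ?thesis
    by simp
qed

lemma extprod_Dop_left: "extprod sc F n (Dop A) B = - pscale sc (of_nat n) (extprod sc F (n - 1) A B)"
proof -
  have "extprod sc F n (Dop A) B + pscale sc (of_nat n) (extprod sc F (n - 1) A B) = 0"
  proof (rule poly_biadditive_eq_0[where P=UNIV and Q=UNIV
        and \<Phi>="\<lambda>A B. extprod sc F n (Dop A) B + pscale sc (of_nat n) (extprod sc F (n - 1) A B)"])
    fix u v a b
    show "extprod sc F n (Dop (monom u a)) (monom v b) + pscale sc (of_nat n) (extprod sc F (n - 1) (monom u a) (monom v b)) = 0"
    proof (cases "n \<noteq> 0 \<and> ext_coeff a b (n - 1) \<noteq> 0")
      case True
      then have deg: "Suc a + b - n = a + b - (n - 1)"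
        unfolding ext_coeff_def by (auto split: if_splits)
      show ?thesis
        unfolding Dop_monom extprod_monom ext_coeff_Suc_left deg P.scale_scale
        by (simp add: P.scale_left_distrib[symmetric])
    qed (auto simp: Dop_monom extprod_monom ext_coeff_Suc_left)
  qed (simp_all add: Dop_add extprod_add_left extprod_add_right P.scale_right_distrib)
  then show ?thesis
    by (simp add: eq_neg_iff_add_eq_0)
qed

lemma Dop_extprod: "Dop (extprod sc F n A B) = extprod sc F n (Dop A) B + extprod sc F n A (Dop B)"
proof -
  have "Dop (extprod sc F n A B) - (extprod sc F n (Dop A) B + extprod sc F n A (Dop B)) = 0"
  proof (rule poly_biadditive_eq_0[where P=UNIV and Q=UNIV
        and \<Phi>="\<lambda>A B. Dop (extprod sc F n A B) - (extprod sc F n (Dop A) B + extprod sc F n A (Dop B))"])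
    fix u v a b
    have "Dop (monom (br u v) (a + b - n)) = monom (br u v) (Suc (a + b) - n)" if "ext_coeff a b n \<noteq> 0"
      using that unfolding Dop_monom ext_coeff_def by (auto split: if_splits intro!: arg_cong[where f="monom _"])
    then have "Dop (extprod sc F n (monom u a) (monom v b)) = pscale sc (ext_coeff a b n) (monom (br u v) (Suc (a + b) - n))"
      unfolding extprod_monom Dop_pscale[OF module_sc] by (cases "ext_coeff a b n = 0") simp_all
    moreover have "extprod sc F n (Dop (monom u a)) (monom v b) + extprod sc F n (monom u a) (Dop (monom v b))
        = pscale sc (ext_coeff a b n) (monom (br u v) (Suc (a + b) - n))"
      unfolding Dop_monom extprod_monom ext_coeff_Pascal[of a b n] by (simp add: P.scale_left_distrib)
    ultimately show "Dop (extprod sc F n (monom u a) (monom v b))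
        - (extprod sc F n (Dop (monom u a)) (monom v b) + extprod sc F n (monom u a) (Dop (monom v b))) = 0"
      by simp
  qed (simp_all add: Dop_add extprod_add_left extprod_add_right algebra_simps)
  then show ?thesis
    by simp
qed

lemma extprod_eq_0: "degree A + degree B < n \<Longrightarrow> extprod sc F n A B = 0"
  unfolding extprod_eq_sum by (intro sum.neutral ballI) (auto simp: ext_term_def ext_coeff_def)

interpretation E: conformal_algebra "pscale sc" Dop "extprod sc F"
proof unfold_locales
  show "\<exists>N. \<forall>j\<ge>N. extprod sc F j u v = 0" for u v
    by (rule exI[of _ "Suc (degree u + degree v)"]) (auto intro: extprod_eq_0)
qed (simp_all add: P.module_axioms[unfolded module_def] Dop_add Dop_pscale[OF module_sc] extprod_add_left
    extprod_add_right extprod_scale_left extprod_scale_right extprod_Dop_left Dop_extprod)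

lemma extprod_const_bracket: "extprod sc F n [:u:] [:v:] = (if n = 0 then [:br u v:] else 0)"
  by (simp add: extprod_const[OF module_sc] F_bracket)

lemma skew_symmetry_const:
  assumes "br u v = - sc s (br v u)"
  shows "E.skew_symmetry s [:u:] [:v:]"
  unfolding E.skew_symmetry_def
proof (intro allI impI)
  fix n K assume K: "\<forall>k\<ge>K. extprod sc F (n + k) [:v:] [:u:] = 0"
  show "E.skew_defect s [:u:] [:v:] n K = 0"
  proof (cases "n = 0")
    case True
    have "(\<Sum>k<K. pscale sc (E.skew_coeff 0 k) ((Dop ^^ k) (extprod sc F k [:v:] [:u:])))
        = (\<Sum>k<K. if k = 0 then [:br v u:] else 0)"
      by (intro sum.cong refl) (simp add: extprod_const_bracket E.skew_coeff_def)
    then show ?thesis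
      using K[rule_format, of 0] True assms
      by (cases "K = 0")
        (simp_all add: E.skew_defect_def extprod_const_bracket pscale_const[OF module_sc]
          module.scale_zero_right[OF module_sc])
  qed (simp add: E.skew_defect_def extprod_const_bracket)
qed

lemma comm_sums_const:
  "E.comm_lhs [:u:] [:v:] [:w:] k m n = (if k = 0 \<and> m = 0 \<and> n = 0 then [:br u (br v w):] else 0)"
  "E.comm_rhs [:u:] [:v:] [:w:] k m n = (if k = 0 \<and> m = 0 \<and> n = 0 then [:br (br u v) w:] else 0)"
proof -
  have "E.comm_lhs [:u:] [:v:] [:w:] k m n
      = (\<Sum>i\<le>k. if i = 0 then (if k = 0 \<and> m = 0 \<and> n = 0 then [:br u (br v w):] else 0) else 0)"
    unfolding E.comm_lhs_def by (intro sum.cong refl) (auto simp: extprod_const_bracket)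
  then show "E.comm_lhs [:u:] [:v:] [:w:] k m n = (if k = 0 \<and> m = 0 \<and> n = 0 then [:br u (br v w):] else 0)"
    by simp
  have "E.comm_rhs [:u:] [:v:] [:w:] k m n
      = (\<Sum>i\<le>m. if i = 0 then (if k = 0 \<and> m = 0 \<and> n = 0 then [:br (br u v) w:] else 0) else 0)"
    unfolding E.comm_rhs_def by (intro sum.cong refl) (auto simp: extprod_const_bracket)
  then show "E.comm_rhs [:u:] [:v:] [:w:] k m n = (if k = 0 \<and> m = 0 \<and> n = 0 then [:br (br u v) w:] else 0)"
    by simp
qed

lemma jacobi_identity_const:
  assumes "br u (br v w) = br (br u v) w + sc s (br v (br u w))"
  shows "E.jacobi_identity s [:u:] [:v:] [:w:]"
  using assms by (auto simp: E.jacobi_identity_def E.jacobi_defect_def comm_sums_const pscale_const[OF module_sc])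

lemma extprod_polypar:
  assumes g: "graded_space sc S0 S1"
    and br_par: "\<And>x y. x \<in> par S0 S1 p \<Longrightarrow> y \<in> par S0 S1 q \<Longrightarrow> br x y \<in> par S0 S1 (p \<noteq> q)"
    and "A \<in> polypar S0 S1 p" and "B \<in> polypar S0 S1 q"
  shows "extprod sc F n A B \<in> polypar S0 S1 (p \<noteq> q)"
  unfolding extprod_eq_sum ext_term_def
proof (intro module.subspace_sum[OF P.module_axioms subspace_polypar[OF g]]
    module.subspace_scale[OF P.module_axioms subspace_polypar[OF g]] monom_in_polypar[OF g])
  show "br (coeff A a) (coeff B b) \<in> par S0 S1 (p \<noteq> q)" for a b
    using assms(3,4) br_par unfolding polypar_def by blast
qed

lemma extprod_skew:
  assumes skew: "\<And>x y. x \<in> par S0 S1 p \<Longrightarrow> y \<in> par S0 S1 q \<Longrightarrow> br x y = - sc (eps p q) (br y x)"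
    and A: "A \<in> polypar S0 S1 p" and B: "B \<in> polypar S0 S1 q"
    and M: "\<forall>k\<ge>M. extprod sc F (n + k) B A = 0"
  shows "extprod sc F n A B = - pscale sc (eps p q)
           (\<Sum>k<M. pscale sc ((-1) ^ (n + k) / of_nat (fact k)) ((Dop ^^ k) (extprod sc F (n + k) B A)))"
proof -
  define K where "K = Suc (degree A + degree B)"
  have K_vanish: "\<forall>k\<ge>K. extprod sc F (n + k) B A = 0"
    unfolding K_def by (auto intro: extprod_eq_0)
  have "E.skew_defect (eps p q) A B n K = 0"
  proof (rule poly_biadditive_eq_0[where P="par S0 S1 p" and Q="par S0 S1 q"
        and \<Phi>="\<lambda>A B. E.skew_defect (eps p q) A B n K"])
    fix u v a b assume "u \<in> par S0 S1 p" "v \<in> par S0 S1 q" "a \<le> degree A" "b \<le> degree B"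
    moreover from this(3,4) have "\<forall>k\<ge>K. extprod sc F (n + k) (monom v b) (monom u a) = 0"
      using degree_monom_le[of v b] degree_monom_le[of u a] unfolding K_def by (auto intro!: extprod_eq_0)
    ultimately show "E.skew_defect (eps p q) (monom u a) (monom v b) n K = 0"
      using E.skew_symmetry_funpow[OF skew_symmetry_const[OF skew], where a=a and b=b]
      unfolding E.skew_symmetry_def funpow_Dop_const by blast
  qed (use A B in \<open>simp_all add: E.skew_defect_add polypar_def\<close>)
  moreover have "E.skew_defect (eps p q) A B n M = E.skew_defect (eps p q) A B n (max M K)"
    using M by (intro E.skew_defect_cutoff[symmetric]) auto
  moreover have "E.skew_defect (eps p q) A B n (max M K) = E.skew_defect (eps p q) A B n K"
    using K_vanish by (intro E.skew_defect_cutoff) auto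
  ultimately show ?thesis
    unfolding E.skew_defect_def E.skew_coeff_def by (simp add: eq_neg_iff_add_eq_0)
qed

lemma extprod_jacobi:
  assumes jacobi: "\<And>x y z. x \<in> par S0 S1 p \<Longrightarrow> y \<in> par S0 S1 q \<Longrightarrow> z \<in> par S0 S1 r \<Longrightarrow>
        br x (br y z) = br (br x y) z + sc (eps p q) (br y (br x z))"
    and A: "A \<in> polypar S0 S1 p" and B: "B \<in> polypar S0 S1 q" and C: "C \<in> polypar S0 S1 r"
  shows "E.jacobi_defect (eps p q) A B C k m n = 0"
proof (rule poly_biadditive_eq_0[where P="par S0 S1 p" and Q="par S0 S1 q"
      and \<Phi>="\<lambda>A B. E.jacobi_defect (eps p q) A B C k m n"])
  fix u v a b assume u: "u \<in> par S0 S1 p" and v: "v \<in> par S0 S1 q"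
  show "E.jacobi_defect (eps p q) (monom u a) (monom v b) C k m n = 0"
  proof (rule poly_additive_eq_0[where P="par S0 S1 r"
        and \<Phi>="\<lambda>C. E.jacobi_defect (eps p q) (monom u a) (monom v b) C k m n"])
    fix w c assume "w \<in> par S0 S1 r"
    then show "E.jacobi_defect (eps p q) (monom u a) (monom v b) (monom w c) k m n = 0"
      using E.jacobi_identity_funpow[OF jacobi_identity_const[OF jacobi[OF u v]], where a=a and b=b and c=c]
      unfolding E.jacobi_identity_def funpow_Dop_const by simp
  qed (use C in \<open>simp_all add: E.jacobi_defect_add polypar_def\<close>)
qed (use A B in \<open>simp_all add: E.jacobi_defect_add polypar_def\<close>)

lemma vertex_Lie_superalgebra_of_Lie:
  assumes "Lie_superalgebra sc S0 S1 br"
  shows "vertex_Lie_superalgebra (pscale sc) (polypar S0 S1 False) (polypar S0 S1 True) Dop (extprod sc F)"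
proof -
  have g: "graded_space sc S0 S1"
    using assms unfolding Lie_superalgebra_def by simp
  have Lie: "br x y \<in> par S0 S1 (p \<noteq> q)" "br x y = - sc (eps p q) (br y x)"
      "br x (br y z) = br (br x y) z + sc (eps p q) (br y (br x z))"
    if "x \<in> par S0 S1 p" "y \<in> par S0 S1 q" "z \<in> par S0 S1 r" for x y z p q r
    using assms that unfolding Lie_superalgebra_def by blast+
  note Lie2 = Lie[OF _ _ zero_in_par[OF g, of False]]
  show ?thesis
    unfolding vertex_Lie_superalgebra_def par_polypar
  proof (intro conjI allI impI)
    fix p q u v assume u: "u \<in> polypar S0 S1 p" and v: "v \<in> polypar S0 S1 q"
    show "extprod sc F n u v \<in> polypar S0 S1 (p \<noteq> q)" for n
      by (rule extprod_polypar[OF g Lie2(1) u v])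
    show "extprod sc F n u v = - pscale sc (eps p q)
           (\<Sum>k<M. pscale sc ((-1) ^ (n + k) / of_nat (fact k)) ((Dop ^^ k) (extprod sc F (n + k) v u)))"
      if "\<forall>k\<ge>M. extprod sc F (n + k) v u = 0" for n M
      by (rule extprod_skew[OF Lie2(2) u v that])
    fix r w k m n assume "w \<in> polypar S0 S1 r"
    then show "(\<Sum>i\<le>k. pscale sc ((-1) ^ i * of_nat (k choose i))
                 (extprod sc F (m + k - i) u (extprod sc F (n + i) v w)
                  - pscale sc (eps p q * (-1) ^ k) (extprod sc F (n + k - i) v (extprod sc F (m + i) u w))))
             = (\<Sum>i\<le>m. pscale sc (of_nat (m choose i)) (extprod sc F (m + n - i) (extprod sc F (k + i) u v) w))"
      using extprod_jacobi[OF Lie(3) u v] E.jacobi_defect_eq[where s="eps p q" and u=u and v=v and w=w and k=k and m=m and n=n] by simp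
  qed (simp_all add: graded_space_poly[OF g] Dop_add Dop_pscale[OF module_sc] Dop_in_polypar[OF g]
      bilinear_map_def extprod_add_left extprod_add_right extprod_scale_left extprod_scale_right
      E.pr_D_left E.D_pr E.locality)
qed

end

section \<open>Formulas of degree zero\<close>

lemma vertex_Lie_superalgebra_skew:
  assumes "vertex_Lie_superalgebra sc U0 U1 D pr" "u \<in> par U0 U1 p" "v \<in> par U0 U1 q"
    and "\<forall>k\<ge>M. pr (n + k) v u = 0"
  shows "pr n u v = - sc (eps p q) (\<Sum>k<M. sc ((-1) ^ (n + k) / of_nat (fact k)) ((D ^^ k) (pr (n + k) v u)))"
  using assms unfolding vertex_Lie_superalgebra_def by blast

lemma vertex_Lie_superalgebra_jacobi:
  assumes "vertex_Lie_superalgebra sc U0 U1 D pr"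
    and "u \<in> par U0 U1 p" "v \<in> par U0 U1 q" "w \<in> par U0 U1 r"
  shows "(\<Sum>i\<le>k. sc ((-1) ^ i * of_nat (k choose i))
            (pr (m + k - i) u (pr (n + i) v w) - sc (eps p q * (-1) ^ k) (pr (n + k - i) v (pr (m + i) u w))))
         = (\<Sum>i\<le>m. sc (of_nat (m choose i)) (pr (m + n - i) (pr (k + i) u v) w))"
  using assms unfolding vertex_Lie_superalgebra_def by blast

lemma graded_biadditive_eq_0:
  fixes f :: "'a::ab_group_add \<Rightarrow> 'a \<Rightarrow> 'b::ab_group_add"
  assumes g: "graded_space sc S0 S1"
    and add: "\<And>x y z. f (x + y) z = f x z + f y z" "\<And>x y z. f z (x + y) = f z x + f z y"
    and hom: "\<And>p q u v. u \<in> par S0 S1 p \<Longrightarrow> v \<in> par S0 S1 q \<Longrightarrow> f u v = 0"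
  shows "f u v = 0"
proof -
  obtain u0 u1 v0 v1 where "u0 \<in> S0" "u1 \<in> S1" "u = u0 + u1" "v0 \<in> S0" "v1 \<in> S1" "v = v0 + v1"
    using g unfolding graded_space_def by meson
  moreover have "f x y = 0" if "x \<in> S0 \<union> S1" "y \<in> S0 \<union> S1" for x y
    using that hom[of x False y False] hom[of x False y True] hom[of x True y False] hom[of x True y True]
    by (auto simp: par_def)
  ultimately show ?thesis
    by (simp add: add)
qed

lemma formula_top_product_vanishes:
  assumes F: "is_formula sc S0 S1 F" and deg: "\<forall>n u v. degree (F n u v) = 0"
    and V: "vertex_Lie_superalgebra (pscale sc) (polypar S0 S1 False) (polypar S0 S1 True) Dop (extprod sc F)"
    and u: "u \<in> par S0 S1 p" and v: "v \<in> par S0 S1 q"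
    and top: "\<forall>j>Suc t. F j v u = 0"
  shows "F (Suc t) v u = 0"
proof -
  have g: "graded_space sc S0 S1" and m: "module sc"
    using F unfolding is_formula_def graded_space_def by blast+
  define c where "c = ((-1) ^ t :: complex)"
  have "\<forall>k\<ge>2. extprod sc F (t + k) [:v:] [:u:] = 0"
    using top by (simp add: extprod_const[OF m])
  from vertex_Lie_superalgebra_skew[OF V _ _ this, of p q]
  have "F t u v = - pscale sc (eps p q) (pscale sc c (F t v u) + pscale sc (- c) (Dop (F (Suc t) v u)))"
    using u v const_in_polypar[OF g]
    by (simp add: par_polypar extprod_const[OF m] numeral_2_eq_2 c_def)
  then have "coeff (F t u v) 1
      = - sc (eps p q) (sc c (coeff (F t v u) 1) + sc (- c) (coeff (F (Suc t) v u) 0))"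
    by (simp add: coeff_pscale[OF m] Dop_def module.scale_right_distrib[OF m])
  then have "sc (eps p q * c) (coeff (F (Suc t) v u) 0) = 0"
    using deg by (simp add: coeff_eq_0 module.scale_zero_right[OF m] module.scale_minus_left[OF m]
        module.scale_minus_right[OF m] module.scale_scale[OF m])
  moreover have "eps p q * c \<noteq> 0"
    by (simp add: eps_def c_def)
  ultimately have "coeff (F (Suc t) v u) 0 = 0"
    using m by (simp add: module_iff_vector_space vector_space.scale_eq_0_iff)
  then show ?thesis
    using degree_0_id[of "F (Suc t) v u"] deg by simp
qed

lemma vanishing_from_top:
  fixes f :: "nat \<Rightarrow> 'a::zero"
  assumes top: "\<forall>j\<ge>N. f j = 0" and step: "\<And>t. \<forall>j>Suc t. f j = 0 \<Longrightarrow> f (Suc t) = 0"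
  shows "n \<ge> 1 \<Longrightarrow> f n = 0"
proof (induction "N - n" arbitrary: n rule: less_induct)
  case less
  show ?case
  proof (cases "N \<le> n")
    case False
    then have "\<forall>j>n. f j = 0"
      using less by (auto intro: less.hyps)
    moreover obtain t where "n = Suc t"
      using less.prems by (cases n) auto
    ultimately show ?thesis
      using step by simp
  qed (use top in simp)
qed

lemma formula_products_vanish:
  assumes F: "is_formula sc S0 S1 F" and deg: "\<forall>n u v. degree (F n u v) = 0"
    and V: "vertex_Lie_superalgebra (pscale sc) (polypar S0 S1 False) (polypar S0 S1 True) Dop (extprod sc F)"
    and "n \<ge> 1"
  shows "F n u v = 0"
proof -
  have g: "graded_space sc S0 S1" and bil: "bilinear_map sc (pscale sc) (F n)"
    and loc: "\<And>u v. \<exists>N. \<forall>j\<ge>N. F j u v = 0"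
    using F unfolding is_formula_def by blast+
  have hom: "F n v u = 0" if "u \<in> par S0 S1 p" and "v \<in> par S0 S1 q" for u v p q
  proof -
    obtain N where "\<forall>j\<ge>N. F j v u = 0"
      using loc by blast
    then show ?thesis
      using vanishing_from_top[of N "\<lambda>j. F j v u"] formula_top_product_vanishes[OF F deg V that] \<open>n \<ge> 1\<close>
      by blast
  qed
  show ?thesis
    using bil
    by (intro graded_biadditive_eq_0[OF g, where f="\<lambda>v u. F n u v", OF _ _ hom]) (simp_all add: bilinear_map_def)
qed

lemma Lie_superalgebra_of_vertex_Lie:
  assumes F: "is_formula sc S0 S1 F" and deg: "\<forall>n u v. degree (F n u v) = 0"
    and V: "vertex_Lie_superalgebra (pscale sc) (polypar S0 S1 False) (polypar S0 S1 True) Dop (extprod sc F)"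
    and vanish: "\<forall>n\<ge>1. \<forall>u v. F n u v = 0"
  shows "Lie_superalgebra sc S0 S1 (\<lambda>u v. coeff (F 0 u v) 0)"
proof -
  define br where "br u v = coeff (F 0 u v) 0" for u v
  have g: "graded_space sc S0 S1" and m: "module sc" and bil: "bilinear_map sc (pscale sc) (F 0)"
    and par: "\<And>p q u v. u \<in> par S0 S1 p \<Longrightarrow> v \<in> par S0 S1 q \<Longrightarrow> F 0 u v \<in> polypar S0 S1 (p \<noteq> q)"
    using F unfolding is_formula_def graded_space_def by blast+
  have F0: "F 0 u v = [:br u v:]" for u v
    using degree_0_id deg unfolding br_def by metis
  have ext: "extprod sc F n [:u:] [:v:] = (if n = 0 then [:br u v:] else 0)" for n u v
    using vanish by (simp add: extprod_const[OF m] F0)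
  have "Lie_superalgebra sc S0 S1 br"
    unfolding Lie_superalgebra_def
  proof (intro conjI allI impI g)
    show "bilinear_map sc sc br"
      using bil unfolding bilinear_map_def br_def by (simp add: coeff_pscale[OF m])
    fix p q r u v w assume u: "u \<in> par S0 S1 p" and v: "v \<in> par S0 S1 q" and w: "w \<in> par S0 S1 r"
    have const: "[:x:] \<in> par (polypar S0 S1 False) (polypar S0 S1 True) p'" if "x \<in> par S0 S1 p'" for x p'
      using const_in_polypar[OF g] that by (simp add: par_polypar)
    show "br u v \<in> par S0 S1 (p \<noteq> q)"
      using par[OF u v] unfolding br_def polypar_def by blast
    have "[:br u v:] = - pscale sc (eps p q) [:br v u:]"
      using vertex_Lie_superalgebra_skew[OF V const[OF u] const[OF v], of 1 0]
      by (simp add: ext module.scale_one[OF module_pscale[OF m]])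
    then show "br u v = - sc (eps p q) (br v u)"
      by (simp add: pscale_const[OF m])
    have "[:br u (br v w):] - pscale sc (eps p q) [:br v (br u w):] = [:br (br u v) w:]"
      using vertex_Lie_superalgebra_jacobi[OF V const[OF u] const[OF v] const[OF w], of 0 0 0]
      by (simp add: ext module.scale_one[OF module_pscale[OF m]])
    then show "br u (br v w) = br (br u v) w + sc (eps p q) (br v (br u w))"
      by (simp add: pscale_const[OF m] algebra_simps)
  qed
  then show ?thesis
    unfolding br_def .
qed

theorem proposition7p6:
  fixes sc :: "complex \<Rightarrow> 'a::ab_group_add \<Rightarrow> 'a"
    and S0 S1 :: "'a set"
    and F :: "nat \<Rightarrow> 'a \<Rightarrow> 'a \<Rightarrow> 'a poly"
  assumes "is_formula sc S0 S1 F"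
    and "\<forall>n u v. degree (F n u v) = 0"
  shows "vertex_Lie_superalgebra (pscale sc) (polypar S0 S1 False) (polypar S0 S1 True) Dop (extprod sc F)
     \<longleftrightarrow> (\<forall>n\<ge>1. \<forall>u v. F n u v = 0) \<and> Lie_superalgebra sc S0 S1 (\<lambda>u v. coeff (F 0 u v) 0)"
proof
  assume V: "vertex_Lie_superalgebra (pscale sc) (polypar S0 S1 False) (polypar S0 S1 True) Dop (extprod sc F)"
  then have "\<forall>n\<ge>1. \<forall>u v. F n u v = 0"
    using formula_products_vanish[OF assms] by blast
  with V show "(\<forall>n\<ge>1. \<forall>u v. F n u v = 0) \<and> Lie_superalgebra sc S0 S1 (\<lambda>u v. coeff (F 0 u v) 0)"
    using Lie_superalgebra_of_vertex_Lie[OF assms] by blast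
next
  assume H: "(\<forall>n\<ge>1. \<forall>u v. F n u v = 0) \<and> Lie_superalgebra sc S0 S1 (\<lambda>u v. coeff (F 0 u v) 0)"
  then have "module sc" and "bilinear_map sc sc (\<lambda>u v. coeff (F 0 u v) 0)"
    unfolding Lie_superalgebra_def graded_space_def by blast+
  moreover have "F n u v = (if n = 0 then [:coeff (F 0 u v) 0:] else 0)" for n u v
    using H assms(2) degree_0_id[of "F 0 u v"] by (cases n) auto
  ultimately show "vertex_Lie_superalgebra (pscale sc) (polypar S0 S1 False) (polypar S0 S1 True) Dop (extprod sc F)"
    using vertex_Lie_superalgebra_of_Lie H by blast
qed

end
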